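(* Let $p>2$ be an integer, $\theta\in(0,1)$, $\sigma>0$, $\bm D_0\in\mathbb O(n)$, and $\bm y=\bm D_0(\bm b\circ\bm g)$ where $\bm b\in\mathbb R^n$ has i.i.d. $\mathrm{Ber}(\theta)$ entries and $\bm g\in\mathbb R^n$ has i.i.d. $\mathcal N(0,\sigma^2)$ entries, independent of $\bm b$. Then for every $\bm a\in\mathbb S^{n-1}$, $$\mathbb E_{\bm y}|\bm a^*\bm y|^p\le\gamma_p\,\theta,\qquad \gamma_p=\sigma^p2^{p/2}\frac{\Gamma(\frac{p+1}{2})}{\sqrt\pi},$$ with equality if and only if $\|\bm a^*\bm D_0\|_0=1$. In particular the maximum of $\mathbb E_{\bm y}|\bm a^*\bm y|^p$ over $\mathbb S^{n-1}$ is $\gamma_p\theta$.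
   Context: $\circ$ is the entrywise product; $\|\bm v\|_0$ is the number of nonzero entries; $\mathbb S^{n-1}$ the unit sphere in $\mathbb R^n$; $\mathbb O(n)$ the real orthogonal group; $\Gamma$ the Gamma function. *)

theory Defs
  imports "HOL-Probability.Probability"
begin

definition bg_measure :: "real \<Rightarrow> real \<Rightarrow> (('n::finite \<Rightarrow> bool) \<times> ('n \<Rightarrow> real)) measure" where
  "bg_measure \<theta> \<sigma> =
     (PiM UNIV (\<lambda>_. measure_pmf (bernoulli_pmf \<theta>))) \<Otimes>\<^sub>M
     (PiM UNIV (\<lambda>_. density lborel (normal_density 0 \<sigma>)))"

definition bg_vec :: "('n::finite \<Rightarrow> bool) \<Rightarrow> ('n \<Rightarrow> real) \<Rightarrow> real ^ 'n" where
  "bg_vec b g = (\<chi> i. (if b i then 1 else 0) * g i)"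

definition moment_p :: "nat \<Rightarrow> real \<Rightarrow> real \<Rightarrow> real^'n^'n \<Rightarrow> real^'n::finite \<Rightarrow> real" where
  "moment_p p \<theta> \<sigma> D0 a =
     (\<integral>bg. \<bar>a \<bullet> (D0 *v bg_vec (fst bg) (snd bg))\<bar> ^ p \<partial>(bg_measure \<theta> \<sigma>))"

definition gamma_p :: "nat \<Rightarrow> real \<Rightarrow> real" where
  "gamma_p p \<sigma> = \<sigma> ^ p * 2 powr (real p / 2) * Gamma ((real p + 1) / 2) / sqrt pi"

definition l0 :: "real^'n::finite \<Rightarrow> nat" where
  "l0 v = card {i. v $ i \<noteq> 0}"

end

theory Submission
  imports Defs
begin

text \<open>Write w = D0^T a, a unit vector. Given the support pattern b, the scalar a^* y =
  sum_j w_j b_j g_j is a centred Gaussian of standard deviation sigma |w o b|, so its p-th absolute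
  moment is gamma_p |w o b|^p. Since |w o b| <= 1 and p > 2, |w o b|^p <= |w o b|^2, whose
  expectation over b is theta |w|^2 = theta. If w had two nonzero entries w_k, w_l, the pattern
  b = e_k, which has positive probability, would give 0 < |w o b| < 1 and hence a strict loss;
  conversely a = D0 e_k attains the bound.\<close>

abbreviation gaussian_vec :: "real \<Rightarrow> ('n::finite \<Rightarrow> real) measure" where
  "gaussian_vec \<sigma> \<equiv> PiM UNIV (\<lambda>_. density lborel (normal_density 0 \<sigma>))"

abbreviation bernoulli_vec :: "real \<Rightarrow> ('n::finite \<Rightarrow> bool) measure" where
  "bernoulli_vec \<theta> \<equiv> PiM UNIV (\<lambda>_. measure_pmf (bernoulli_pmf \<theta>))"

section \<open>Absolute moments of Gaussians\<close>

lemma Gamma_nat_plus_half: "Gamma (real k + 1/2) = fact (2*k) * sqrt pi / (4^k * fact k)"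
proof (induction k)
  case 0
  then show ?case using Gamma_one_half_real by simp
next
  case (Suc k)
  have "real k + 1/2 \<notin> \<int>\<^sub>\<le>\<^sub>0"
    using nonpos_Ints_nonpos by fastforce
  then have "Gamma (real (Suc k) + 1/2) = (real k + 1/2) * Gamma (real k + 1/2)"
    using Gamma_plus1[of "real k + 1/2"] by (simp add: algebra_simps)
  also have "\<dots> = (real k + 1/2) * (fact (2*k) * sqrt pi / (4^k * fact k))"
    using Suc by simp
  also have "\<dots> = fact (2*Suc k) * sqrt pi / (4^Suc k * fact (Suc k))"
    by (simp add: field_simps del: fact_Suc) (simp add: field_simps)
  finally show ?case .
qed

lemma gamma_p_pos: "\<sigma> > 0 \<Longrightarrow> gamma_p p \<sigma> > 0"
  unfolding gamma_p_def by (intro divide_pos_pos mult_pos_pos Gamma_real_pos) auto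

lemma gamma_p_mult: "t \<ge> 0 \<Longrightarrow> gamma_p p (\<sigma> * t) = gamma_p p \<sigma> * t ^ p"
  by (simp add: gamma_p_def power_mult_distrib)

lemma integral_normal_abs_moment:
  assumes s: "s > 0"
  shows "(\<integral>x. normal_density 0 s x * \<bar>x\<bar> ^ p \<partial>lborel) = gamma_p p s"
proof (cases "even p")
  case True
  then obtain k where p: "p = 2*k" by auto
  have "(\<integral>x. normal_density 0 s x * \<bar>x\<bar> ^ p \<partial>lborel) = fact (2*k) / ((2 / s\<^sup>2)^k * fact k)"
    using integral_normal_moment_even[OF s, of 0 k] by (simp add: p power_mult)
  also have "\<dots> = gamma_p p s"
  proof -
    have "2 powr (real p / 2) = 2^k" by (simp add: p powr_realpow)
    moreover have "Gamma ((real p + 1) / 2) = Gamma (real k + 1/2)"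
      by (simp add: p add_divide_distrib)
    ultimately have "gamma_p p s = (s\<^sup>2)^k * 2^k * (fact (2*k) * sqrt pi / (4^k * fact k)) / sqrt pi"
      unfolding gamma_p_def Gamma_nat_plus_half by (simp add: p power_mult)
    moreover have "(4::real)^k = 2^k * 2^k" by (simp add: power_mult_distrib[symmetric])
    ultimately show ?thesis
      using s by (simp add: power_divide field_simps)
  qed
  finally show ?thesis .
next
  case False
  then obtain k where p: "p = 2*k + 1" using oddE by blast
  have "(\<integral>x. normal_density 0 s x * \<bar>x\<bar> ^ p \<partial>lborel) = 2^k * s^(2*k + 1) * fact k * sqrt (2 / pi)"
    using integral_normal_moment_abs_odd[OF s, of 0 k] by (simp add: p)
  also have "\<dots> = gamma_p p s"
  proof -
    have "2 powr (real p / 2) = 2^k * sqrt 2"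
      by (simp add: p add_divide_distrib powr_add powr_realpow powr_half_sqrt)
    moreover have "Gamma ((real p + 1) / 2) = fact k"
      using Gamma_fact[of k] by (simp add: p add_divide_distrib)
    ultimately show ?thesis
      using s by (simp add: gamma_p_def p real_sqrt_divide field_simps)
  qed
  finally show ?thesis .
qed

section \<open>Linear combinations of i.i.d. Gaussians\<close>

lemma prob_space_gaussian_vec: "\<sigma> > 0 \<Longrightarrow> prob_space (gaussian_vec \<sigma>)"
  by (intro prob_space_PiM prob_space_normal_density)

lemma distributed_gaussian_vec_coordinate:
  assumes "\<sigma> > 0"
  shows "distributed (gaussian_vec \<sigma>) lborel (\<lambda>g. g j) (normal_density 0 \<sigma>)"
proof -
  have "distr (gaussian_vec \<sigma>) lborel (\<lambda>g. g j)
      = distr (gaussian_vec \<sigma>) (density lborel (normal_density 0 \<sigma>)) (\<lambda>g. g j)"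
    by (rule distr_cong) auto
  also have "\<dots> = density lborel (normal_density 0 \<sigma>)"
    using assms by (intro distr_PiM_component prob_space_normal_density) auto
  finally show ?thesis
    unfolding distributed_def by (auto simp: measurable_cong_sets[OF refl sets_density])
qed

lemma indep_vars_gaussian_vec_coordinates:
  assumes "\<sigma> > 0"
  shows "prob_space.indep_vars (gaussian_vec \<sigma>) (\<lambda>_. borel) (\<lambda>j g. g j) (UNIV :: 'n::finite set)"
proof -
  define N where "N = density lborel (normal_density 0 \<sigma>)"
  interpret G: prob_space "gaussian_vec \<sigma> :: ('n \<Rightarrow> real) measure"
    using prob_space_gaussian_vec[OF assms] .
  have N: "prob_space N" unfolding N_def using assms by (rule prob_space_normal_density)
  have "G.indep_vars (\<lambda>_. N) (\<lambda>j g. g j) UNIV"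
  proof (subst G.indep_vars_iff_distr_eq_PiM)
    have "distr (gaussian_vec \<sigma>) (PiM UNIV (\<lambda>_. N)) (\<lambda>x. \<lambda>i\<in>UNIV. x i)
        = distr (gaussian_vec \<sigma>) (gaussian_vec \<sigma>) (\<lambda>x. x)"
      by (rule distr_cong) (auto simp: N_def)
    also have "\<dots> = PiM UNIV (\<lambda>i. distr (gaussian_vec \<sigma>) N (\<lambda>x. x i))"
      using N unfolding distr_id N_def by (subst distr_PiM_component) auto
    finally show "distr (gaussian_vec \<sigma>) (PiM UNIV (\<lambda>_. N)) (\<lambda>x. \<lambda>i\<in>UNIV. x i)
        = PiM UNIV (\<lambda>i. distr (gaussian_vec \<sigma>) N (\<lambda>x. x i))" .
  qed (auto simp: N_def)
  from G.indep_vars_compose2[OF this, of "\<lambda>_ x. x" "\<lambda>_. borel"] show ?thesis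
    by (simp add: N_def measurable_cong_sets[OF sets_density refl])
qed

lemma distributed_gaussian_combination:
  fixes c :: "'n::finite \<Rightarrow> real"
  assumes \<sigma>: "\<sigma> > 0" and c: "c j0 \<noteq> 0"
  shows "distributed (gaussian_vec \<sigma>) lborel (\<lambda>g. \<Sum>j\<in>UNIV. c j * g j)
           (normal_density 0 (\<sigma> * sqrt (\<Sum>j\<in>UNIV. (c j)\<^sup>2)))"
proof -
  interpret G: prob_space "gaussian_vec \<sigma> :: ('n \<Rightarrow> real) measure"
    using prob_space_gaussian_vec[OF \<sigma>] .
  define I where "I = {j. c j \<noteq> 0}"
  have sum_I: "(\<Sum>j\<in>UNIV. f j) = (\<Sum>j\<in>I. f j)" if "\<And>j. c j = 0 \<Longrightarrow> f j = 0" for f :: "'n \<Rightarrow> real"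
    using that by (intro sum.mono_neutral_right) (auto simp: I_def)
  have "G.indep_vars (\<lambda>_. borel) (\<lambda>j g. c j * g j) I"
    using G.indep_vars_compose2[OF indep_vars_gaussian_vec_coordinates[OF \<sigma>],
        of "\<lambda>j x. c j * x" "\<lambda>_. borel"]
    by (auto intro: G.indep_vars_subset)
  moreover have "distributed (gaussian_vec \<sigma>) lborel (\<lambda>g. c j * g j) (normal_density 0 (\<bar>c j\<bar> * \<sigma>))"
    if "j \<in> I" for j
    using G.normal_density_affine[OF distributed_gaussian_vec_coordinate[OF \<sigma>] \<sigma>, of "c j" 0] that
    by (simp add: I_def)
  moreover have "I \<noteq> {}"
    using c by (auto simp: I_def)
  ultimately have "distributed (gaussian_vec \<sigma>) lborel (\<lambda>g. \<Sum>j\<in>I. c j * g j)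
      (normal_density (\<Sum>j\<in>I. 0) (sqrt (\<Sum>j\<in>I. (\<bar>c j\<bar> * \<sigma>)\<^sup>2)))"
    using \<sigma> by (intro G.sum_indep_normal) (auto simp: I_def)
  moreover have "sqrt (\<Sum>j\<in>I. (\<bar>c j\<bar> * \<sigma>)\<^sup>2) = \<sigma> * sqrt (\<Sum>j\<in>UNIV. (c j)\<^sup>2)"
    using \<sigma> by (simp add: sum_I power_mult_distrib sum_distrib_right[symmetric] real_sqrt_mult)
  ultimately show ?thesis
    by (simp add: sum_I)
qed

lemma nn_integral_abs_gaussian_combination:
  fixes c :: "'n::finite \<Rightarrow> real"
  assumes \<sigma>: "\<sigma> > 0" and p: "p > 0"
  shows "(\<integral>\<^sup>+ g. ennreal (\<bar>\<Sum>j\<in>UNIV. c j * g j\<bar> ^ p) \<partial>gaussian_vec \<sigma>)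
       = ennreal (gamma_p p \<sigma> * sqrt (\<Sum>j\<in>UNIV. (c j)\<^sup>2) ^ p)"
proof (cases "\<exists>j. c j \<noteq> 0")
  case False
  then show ?thesis
    using p by (simp add: zero_power prob_space.emeasure_space_1[OF prob_space_gaussian_vec[OF \<sigma>]])
next
  case True
  then obtain j0 where "c j0 \<noteq> 0" by blast
  define s where "s = \<sigma> * sqrt (\<Sum>j\<in>UNIV. (c j)\<^sup>2)"
  have "(\<Sum>j\<in>UNIV. (c j)\<^sup>2) > 0"
    using \<open>c j0 \<noteq> 0\<close> by (intro sum_pos2[of _ j0]) auto
  then have s: "s > 0"
    using \<sigma> by (simp add: s_def)
  have "(\<integral>\<^sup>+ g. ennreal (\<bar>\<Sum>j\<in>UNIV. c j * g j\<bar> ^ p) \<partial>gaussian_vec \<sigma>)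
      = (\<integral>\<^sup>+ x. ennreal (normal_density 0 s x) * ennreal (\<bar>x\<bar> ^ p) \<partial>lborel)"
    using distributed_nn_integral[OF distributed_gaussian_combination[of \<sigma> c j0, OF \<sigma> \<open>c j0 \<noteq> 0\<close>],
        of "\<lambda>x. ennreal (\<bar>x\<bar> ^ p)"]
    by (simp add: s_def)
  also have "\<dots> = ennreal (\<integral>x. normal_density 0 s x * \<bar>x\<bar> ^ p \<partial>lborel)"
    using integrable_normal_moment_abs[OF s, of 0 p]
    by (simp add: ennreal_mult[symmetric] nn_integral_eq_integral)
  also have "\<dots> = ennreal (gamma_p p \<sigma> * sqrt (\<Sum>j\<in>UNIV. (c j)\<^sup>2) ^ p)"
    unfolding integral_normal_abs_moment[OF s] by (simp add: s_def gamma_p_mult sum_nonneg)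
  finally show ?thesis .
qed

section \<open>Conditioning on the support\<close>

definition masked_sq_norm :: "('n::finite \<Rightarrow> real) \<Rightarrow> ('n \<Rightarrow> bool) \<Rightarrow> real" where
  "masked_sq_norm w b = (\<Sum>j\<in>UNIV. (w j)\<^sup>2 * (if b j then 1 else 0))"

lemma inner_matrix_bg_vec:
  "a \<bullet> (D0 *v bg_vec b g) = (\<Sum>j\<in>UNIV. ((a v* D0) $ j * (if b j then 1 else 0)) * g j)"
proof -
  have "a \<bullet> (D0 *v bg_vec b g) = (a v* D0) \<bullet> bg_vec b g"
    by (rule dot_lmul_matrix[symmetric])
  then show ?thesis
    by (simp add: inner_vec_def bg_vec_def mult.assoc)
qed

lemma moment_p_eq_integral_masked_norm:
  fixes D0 :: "real^'n::finite^'n"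
  assumes \<sigma>: "\<sigma> > 0" and p: "p > 0"
  shows "moment_p p \<theta> \<sigma> D0 a
       = gamma_p p \<sigma> * (\<integral>b. sqrt (masked_sq_norm (\<lambda>j. (a v* D0) $ j) b) ^ p \<partial>bernoulli_vec \<theta>)"
proof -
  define w where "w j = (a v* D0) $ j" for j
  define F where "F x = \<bar>\<Sum>j\<in>UNIV. (w j * (if fst x j then 1 else 0)) * snd x j\<bar> ^ p"
    for x :: "('n \<Rightarrow> bool) \<times> ('n \<Rightarrow> real)"
  define h where "h b = gamma_p p \<sigma> * sqrt (masked_sq_norm w b) ^ p" for b :: "'n \<Rightarrow> bool"
  interpret G: prob_space "gaussian_vec \<sigma> :: ('n \<Rightarrow> real) measure"
    using prob_space_gaussian_vec[OF \<sigma>] .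
  have F_measurable: "F \<in> borel_measurable (bernoulli_vec \<theta> \<Otimes>\<^sub>M gaussian_vec \<sigma>)"
    unfolding F_def by measurable
  have h_measurable: "h \<in> borel_measurable (bernoulli_vec \<theta>)"
    unfolding h_def masked_sq_norm_def by measurable
  have inner: "(\<integral>\<^sup>+ g. ennreal (F (b, g)) \<partial>gaussian_vec \<sigma>) = ennreal (h b)" for b
  proof -
    have "(\<Sum>j\<in>UNIV. (w j * (if b j then 1 else 0))\<^sup>2) = masked_sq_norm w b"
      unfolding masked_sq_norm_def by (intro sum.cong) auto
    then show ?thesis
      using nn_integral_abs_gaussian_combination[OF \<sigma> p, of "\<lambda>j. w j * (if b j then 1 else 0)"]
      by (simp add: F_def h_def)
  qed
  have "moment_p p \<theta> \<sigma> D0 a = integral\<^sup>L (bernoulli_vec \<theta> \<Otimes>\<^sub>M gaussian_vec \<sigma>) F"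
    unfolding moment_p_def bg_measure_def F_def w_def inner_matrix_bg_vec by simp
  also have "\<dots> = enn2real (\<integral>\<^sup>+ x. ennreal (F x) \<partial>(bernoulli_vec \<theta> \<Otimes>\<^sub>M gaussian_vec \<sigma>))"
    by (rule integral_eq_nn_integral[OF F_measurable]) (auto simp: F_def)
  also have "(\<integral>\<^sup>+ x. ennreal (F x) \<partial>(bernoulli_vec \<theta> \<Otimes>\<^sub>M gaussian_vec \<sigma>))
      = (\<integral>\<^sup>+ b. ennreal (h b) \<partial>bernoulli_vec \<theta>)"
    using F_measurable by (simp add: G.nn_integral_fst[symmetric] inner)
  also have "enn2real \<dots> = integral\<^sup>L (bernoulli_vec \<theta>) h"
    using gamma_p_pos[OF \<sigma>, of p]
    by (intro integral_eq_nn_integral[OF h_measurable, symmetric])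
       (auto simp: h_def masked_sq_norm_def sum_nonneg)
  finally show ?thesis
    unfolding h_def w_def by simp
qed

section \<open>Averaging over the Bernoulli support\<close>

lemma prob_space_bernoulli_vec: "prob_space (bernoulli_vec \<theta>)"
  by (intro prob_space_PiM measure_pmf.prob_space_axioms)

lemma singleton_eq_PiE: "{b} = (\<Pi>\<^sub>E j\<in>UNIV. {b j})"
  by (auto simp: PiE_def extensional_def fun_eq_iff)

lemma sets_bernoulli_vec: "sets (bernoulli_vec \<theta>) = sets (count_space (UNIV :: ('n::finite \<Rightarrow> bool) set))"
proof -
  have space: "space (bernoulli_vec \<theta> :: ('n \<Rightarrow> bool) measure) = UNIV"
    by (simp add: space_PiM PiE_UNIV)
  have "A \<in> sets (bernoulli_vec \<theta>)" for A :: "('n \<Rightarrow> bool) set"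
  proof -
    have "{b} \<in> sets (bernoulli_vec \<theta>)" for b :: "'n \<Rightarrow> bool"
      unfolding singleton_eq_PiE by (rule sets_PiM_I_finite) auto
    then have "(\<Union>b\<in>A. {b}) \<in> sets (bernoulli_vec \<theta>)"
      by (intro sets.finite_UN) auto
    then show ?thesis
      by simp
  qed
  then show ?thesis
    using sets.sets_into_space[of _ "bernoulli_vec \<theta> :: ('n \<Rightarrow> bool) measure"]
    by (auto simp: space)
qed

lemma integrable_bernoulli_vec: "integrable (bernoulli_vec \<theta>) (f :: ('n::finite \<Rightarrow> bool) \<Rightarrow> real)"
proof -
  interpret prob_space "bernoulli_vec \<theta> :: ('n \<Rightarrow> bool) measure"
    by (rule prob_space_bernoulli_vec)
  have "f \<in> borel_measurable (bernoulli_vec \<theta>)"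
    by (simp add: measurable_cong_sets[OF sets_bernoulli_vec refl])
  moreover have "\<bar>f b\<bar> \<le> (\<Sum>b'\<in>UNIV. \<bar>f b'\<bar>)" for b
    by (rule member_le_sum) auto
  ultimately show ?thesis
    by (intro integrable_const_bound) auto
qed

lemma integral_bernoulli_vec_coordinate:
  fixes j :: "'n::finite"
  assumes "0 \<le> \<theta>" "\<theta> \<le> 1"
  shows "(\<integral>b. (if b j then 1 else 0) \<partial>bernoulli_vec \<theta>) = \<theta>"
proof -
  have "(\<integral>b. (if b j then 1 else 0) \<partial>bernoulli_vec \<theta>)
      = (\<integral>x. (if x then 1 else 0 :: real) \<partial>distr (bernoulli_vec \<theta>) (measure_pmf (bernoulli_pmf \<theta>)) (\<lambda>b. b j))"
    by (rule integral_distr[symmetric]) auto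
  also have "distr (bernoulli_vec \<theta>) (measure_pmf (bernoulli_pmf \<theta>)) (\<lambda>b. b j) = measure_pmf (bernoulli_pmf \<theta>)"
    by (intro distr_PiM_component measure_pmf.prob_space_axioms) auto
  also have "(\<integral>x. (if x then 1 else 0) \<partial>measure_pmf (bernoulli_pmf \<theta>)) = \<theta>"
    using assms by (subst integral_measure_pmf_real[where A=UNIV]) (auto simp: UNIV_bool)
  finally show ?thesis .
qed

lemma measure_bernoulli_vec_singleton_pos:
  fixes b :: "'n::finite \<Rightarrow> bool"
  assumes "0 < \<theta>" "\<theta> < 1"
  shows "measure (bernoulli_vec \<theta>) {b} > 0"
proof -
  interpret finite_product_prob_space "\<lambda>_::'n. measure_pmf (bernoulli_pmf \<theta>)" UNIV
    by unfold_locales simp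
  have "measure (bernoulli_vec \<theta>) {b} = (\<Prod>j\<in>UNIV. measure (measure_pmf (bernoulli_pmf \<theta>)) {b j})"
    unfolding singleton_eq_PiE by (rule prob_times) auto
  also have "\<dots> > 0"
    using assms by (intro prod_pos) (auto simp: measure_pmf_single pmf_positive)
  finally show ?thesis .
qed

lemma integral_less_of_atom:
  fixes f g :: "'a \<Rightarrow> real"
  assumes f: "integrable M f" and g: "integrable M g" and le: "\<And>x. x \<in> space M \<Longrightarrow> f x \<le> g x"
    and x0: "{x0} \<in> sets M" "measure M {x0} > 0" and less: "f x0 < g x0"
  shows "integral\<^sup>L M f < integral\<^sup>L M g"
proof -
  define d where "d = g x0 - f x0"
  have "emeasure M {x0} < \<infinity>"
    using x0(2) by (simp add: measure_def enn2real_positive_iff)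
  then have indicator_integrable: "integrable M (\<lambda>x. d * indicator {x0} x)"
    using x0(1) by simp
  have "0 < d * measure M {x0}"
    using x0(2) less by (simp add: d_def)
  also have "\<dots> = (\<integral>x. d * indicator {x0} x \<partial>M)"
    using sets.sets_into_space[OF x0(1)] by (simp add: Int_absorb2)
  also have "\<dots> \<le> (\<integral>x. g x - f x \<partial>M)"
    using le by (intro integral_mono indicator_integrable Bochner_Integration.integrable_diff f g)
       (auto simp: d_def indicator_def)
  also have "\<dots> = integral\<^sup>L M g - integral\<^sup>L M f"
    using g f by (rule Bochner_Integration.integral_diff)
  finally show ?thesis
    by simp
qed

lemma sqrt_power_eq_mult: "0 \<le> x \<Longrightarrow> 2 \<le> p \<Longrightarrow> sqrt x ^ p = x * sqrt x ^ (p - 2)"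
  by (metis le_add_diff_inverse power_add real_sqrt_pow2)

lemma sqrt_power_le_self: "0 \<le> x \<Longrightarrow> x \<le> 1 \<Longrightarrow> 2 \<le> p \<Longrightarrow> sqrt x ^ p \<le> x"
  by (simp add: sqrt_power_eq_mult mult_left_le power_le_one)

lemma sqrt_power_less_self: "0 < x \<Longrightarrow> x < 1 \<Longrightarrow> 2 < p \<Longrightarrow> sqrt x ^ p < x"
  by (simp add: sqrt_power_eq_mult power_less_one_iff)

lemma masked_sq_norm_nonneg: "0 \<le> masked_sq_norm w b"
  unfolding masked_sq_norm_def by (intro sum_nonneg) auto

lemma masked_sq_norm_le: "masked_sq_norm w b \<le> (\<Sum>j\<in>UNIV. (w j)\<^sup>2)"
  unfolding masked_sq_norm_def by (intro sum_mono) auto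

lemma masked_sq_norm_single: "masked_sq_norm w (\<lambda>j. j = k) = (w k)\<^sup>2"
  unfolding masked_sq_norm_def by (subst sum.mono_neutral_right[of UNIV "{k}"]) auto

lemma integral_masked_sq_norm:
  assumes "0 \<le> \<theta>" "\<theta> \<le> 1"
  shows "(\<integral>b. masked_sq_norm w b \<partial>bernoulli_vec \<theta>) = \<theta> * (\<Sum>j\<in>UNIV. (w j)\<^sup>2)"
  unfolding masked_sq_norm_def
  by (simp add: integrable_bernoulli_vec integral_bernoulli_vec_coordinate[OF assms]
      sum_distrib_left mult.commute)

lemma integral_masked_norm_power_le:
  assumes "0 \<le> \<theta>" "\<theta> \<le> 1" "2 \<le> p" and w: "(\<Sum>j\<in>UNIV. (w j)\<^sup>2) = 1"
  shows "(\<integral>b. sqrt (masked_sq_norm w b) ^ p \<partial>bernoulli_vec \<theta>) \<le> \<theta>"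
proof -
  have "(\<integral>b. sqrt (masked_sq_norm w b) ^ p \<partial>bernoulli_vec \<theta>) \<le> (\<integral>b. masked_sq_norm w b \<partial>bernoulli_vec \<theta>)"
    using masked_sq_norm_le[of w] w \<open>2 \<le> p\<close>
    by (intro integral_mono integrable_bernoulli_vec sqrt_power_le_self masked_sq_norm_nonneg) auto
  then show ?thesis
    using assms by (simp add: integral_masked_sq_norm)
qed

lemma integral_masked_norm_power_less:
  fixes w :: "'n::finite \<Rightarrow> real"
  assumes \<theta>: "0 < \<theta>" "\<theta> < 1" and p: "2 < p" and w: "(\<Sum>j\<in>UNIV. (w j)\<^sup>2) = 1"
    and kl: "w k \<noteq> 0" "w l \<noteq> 0" "k \<noteq> l"
  shows "(\<integral>b. sqrt (masked_sq_norm w b) ^ p \<partial>bernoulli_vec \<theta>) < \<theta>"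
proof -
  have "(w k)\<^sup>2 + (w l)\<^sup>2 \<le> (\<Sum>j\<in>UNIV. (w j)\<^sup>2)"
    using sum_mono2[of UNIV "{k, l}" "\<lambda>j. (w j)\<^sup>2"] kl by simp
  moreover have "(w l)\<^sup>2 > 0"
    using kl by simp
  ultimately have "(w k)\<^sup>2 < 1"
    using w by linarith
  then have "sqrt (masked_sq_norm w (\<lambda>j. j = k)) ^ p < masked_sq_norm w (\<lambda>j. j = k)"
    unfolding masked_sq_norm_single using kl p by (intro sqrt_power_less_self) auto
  then have "(\<integral>b. sqrt (masked_sq_norm w b) ^ p \<partial>bernoulli_vec \<theta>) < (\<integral>b. masked_sq_norm w b \<partial>bernoulli_vec \<theta>)"
    using masked_sq_norm_le[of w] w p \<theta>
    by (intro integral_less_of_atom integrable_bernoulli_vec sqrt_power_le_self masked_sq_norm_nonneg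
        measure_bernoulli_vec_singleton_pos)
       (auto simp: sets_bernoulli_vec)
  then show ?thesis
    using \<theta> w by (simp add: integral_masked_sq_norm)
qed

lemma integral_masked_norm_power_eq_iff:
  fixes w :: "'n::finite \<Rightarrow> real"
  assumes \<theta>: "0 < \<theta>" "\<theta> < 1" and p: "2 < p" and w: "(\<Sum>j\<in>UNIV. (w j)\<^sup>2) = 1"
  shows "(\<integral>b. sqrt (masked_sq_norm w b) ^ p \<partial>bernoulli_vec \<theta>) = \<theta> \<longleftrightarrow> card {j. w j \<noteq> 0} = 1"
proof
  assume "card {j. w j \<noteq> 0} = 1"
  then obtain k where k: "{j. w j \<noteq> 0} = {k}"
    by (rule card_1_singletonE)
  then have "(\<Sum>j\<in>UNIV. (w j)\<^sup>2) = (w k)\<^sup>2"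
    by (subst sum.mono_neutral_right[of UNIV "{k}"]) auto
  then have mask: "masked_sq_norm w b = (if b k then 1 else 0)" for b
    using k w unfolding masked_sq_norm_def
    by (subst sum.mono_neutral_right[of UNIV "{k}"]) auto
  have "sqrt (masked_sq_norm w b) ^ p = (if b k then 1 else 0)" for b
    using p by (cases "b k") (simp_all add: mask)
  then show "(\<integral>b. sqrt (masked_sq_norm w b) ^ p \<partial>bernoulli_vec \<theta>) = \<theta>"
    using \<theta> integral_bernoulli_vec_coordinate[of \<theta> k] by simp
next
  assume eq: "(\<integral>b. sqrt (masked_sq_norm w b) ^ p \<partial>bernoulli_vec \<theta>) = \<theta>"
  obtain k where k: "w k \<noteq> 0"
    using w by (metis (mono_tags) sum.neutral power_zero_numeral zero_neq_one)
  have "w l = 0" if "l \<noteq> k" for l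
    using integral_masked_norm_power_less[OF \<theta> p w k, of l] that eq by fastforce
  then have "{j. w j \<noteq> 0} = {k}"
    using k by blast
  then show "card {j. w j \<noteq> 0} = 1"
    by simp
qed

section \<open>The maximal moment\<close>

lemma sum_sq_vector_matrix_orthogonal:
  fixes Q :: "real^'n::finite^'n"
  assumes "orthogonal_matrix Q" "norm a = 1"
  shows "(\<Sum>j\<in>UNIV. ((a v* Q) $ j)\<^sup>2) = 1"
proof -
  have "orthogonal_transformation (\<lambda>x. transpose Q *v x)"
    using assms(1)
    by (simp only: orthogonal_transformation_matrix matrix_of_matrix_vector_mul
        orthogonal_matrix_transpose matrix_vector_mul_linear simp_thms)
  from orthogonal_transformation_norm[OF this, of a] have "norm (a v* Q) = 1"
    using assms(2) by simp
  then show ?thesis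
    by (simp add: norm_eq_1 inner_vec_def power2_eq_square)
qed

lemma moment_p_le_and_eq_iff:
  fixes D0 :: "real^'n::finite^'n"
  assumes p: "p > 2" and \<theta>: "0 < \<theta>" "\<theta> < 1" and \<sigma>: "\<sigma> > 0"
    and D0: "orthogonal_matrix D0" and a: "norm a = 1"
  shows "moment_p p \<theta> \<sigma> D0 a \<le> gamma_p p \<sigma> * \<theta>"
    and "moment_p p \<theta> \<sigma> D0 a = gamma_p p \<sigma> * \<theta> \<longleftrightarrow> l0 (a v* D0) = 1"
proof -
  define w where "w j = (a v* D0) $ j" for j
  have w: "(\<Sum>j\<in>UNIV. (w j)\<^sup>2) = 1"
    unfolding w_def using D0 a by (rule sum_sq_vector_matrix_orthogonal)
  have moment: "moment_p p \<theta> \<sigma> D0 a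
      = gamma_p p \<sigma> * (\<integral>b. sqrt (masked_sq_norm w b) ^ p \<partial>bernoulli_vec \<theta>)"
    unfolding w_def using \<sigma> p by (intro moment_p_eq_integral_masked_norm) auto
  have gamma: "gamma_p p \<sigma> > 0"
    using \<sigma> by (rule gamma_p_pos)
  show "moment_p p \<theta> \<sigma> D0 a \<le> gamma_p p \<sigma> * \<theta>"
    unfolding moment using gamma \<theta> p w
    by (intro mult_left_mono integral_masked_norm_power_le) auto
  have l0: "l0 (a v* D0) = card {j. w j \<noteq> 0}"
    by (simp add: l0_def w_def)
  show "moment_p p \<theta> \<sigma> D0 a = gamma_p p \<sigma> * \<theta> \<longleftrightarrow> l0 (a v* D0) = 1"
    unfolding moment l0 using gamma integral_masked_norm_power_eq_iff[OF \<theta> p w] by simp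
qed

lemma exists_unit_l0_vector_matrix_eq_1:
  fixes D0 :: "real^'n::finite^'n"
  assumes "orthogonal_matrix D0"
  obtains a where "norm a = 1" "l0 (a v* D0) = 1"
proof
  fix k :: 'n
  define e :: "real^'n" where "e = axis k 1"
  have "(D0 *v e) v* D0 = (transpose D0 ** D0) *v e"
    by (simp add: transpose_matrix_vector[symmetric] matrix_vector_mul_assoc)
  also have "\<dots> = e"
    using assms by (simp add: orthogonal_matrix)
  finally have e: "(D0 *v e) v* D0 = e" .
  show "l0 ((D0 *v e) v* D0) = 1"
    unfolding e by (simp add: l0_def e_def axis_def)
  have "orthogonal_transformation (\<lambda>x. D0 *v x)"
    using assms by (simp add: orthogonal_transformation_matrix)
  then show "norm (D0 *v e) = 1"
    by (simp add: orthogonal_transformation_norm e_def)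
qed

theorem mainTheorem6:
  fixes p :: nat and \<theta> \<sigma> :: real and D0 :: "real^'n::finite^'n"
  assumes "p > 2" and "0 < \<theta>" and "\<theta> < 1" and "\<sigma> > 0"
    and "orthogonal_matrix D0"
  shows "(\<forall>a::real^'n. a \<in> sphere 0 1 \<longrightarrow>
            moment_p p \<theta> \<sigma> D0 a \<le> gamma_p p \<sigma> * \<theta> \<and>
            (moment_p p \<theta> \<sigma> D0 a = gamma_p p \<sigma> * \<theta> \<longleftrightarrow> l0 (a v* D0) = 1))
         \<and> (SUP a\<in>sphere (0::real^'n) 1. moment_p p \<theta> \<sigma> D0 a) = gamma_p p \<sigma> * \<theta>"
proof -
  note bound = moment_p_le_and_eq_iff[OF assms]
  obtain a0 :: "real^'n" where "norm a0 = 1" "l0 (a0 v* D0) = 1"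
    using exists_unit_l0_vector_matrix_eq_1[OF assms(5)] by blast
  then have "a0 \<in> sphere 0 1" "moment_p p \<theta> \<sigma> D0 a0 = gamma_p p \<sigma> * \<theta>"
    using bound(2) by auto
  then have "gamma_p p \<sigma> * \<theta> \<in> moment_p p \<theta> \<sigma> D0 ` sphere 0 1"
    by (metis rev_image_eqI)
  then have "(SUP a\<in>sphere (0::real^'n) 1. moment_p p \<theta> \<sigma> D0 a) = gamma_p p \<sigma> * \<theta>"
    using bound(1) by (intro cSup_eq_maximum) auto
  with bound show ?thesis
    by simp
qed

end
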